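(* For all $x\in\mathbb{C}\setminus\{0,\pm2i,\pm\sqrt2\,i\}$ and all integers $n\ge0$, \[ \sum_{k=0}^n\Big(\frac{2}{x^2+2}\Big)^kL_{2k}(x)=\frac{2^{n+1}}{x(x^2+2)^n}F_{2n+2}(x) \] and \[ \sum_{k=0}^n\Big(\frac{2}{x^2+2}\Big)^kF_{2k}(x)=\frac{x^2+2}{x(x^2+4)}\bigg(\Big(\frac{2}{x^2+2}\Big)^{n+1}L_{2n+2}(x)-2\bigg). \]
   Context: The Fibonacci polynomials $F_n(x)$ and Lucas polynomials $L_n(x)$ are defined by $F_0(x)=0$, $F_1(x)=1$, $L_0(x)=2$, $L_1(x)=x$ and $W_n(x)=xW_{n-1}(x)+W_{n-2}(x)$ for $n\ge2$ (for $W=F$ and $W=L$). Here $i=\sqrt{-1}$. *)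

theory Defs
  imports Complex_Main
begin

fun fibpoly :: "nat \<Rightarrow> complex \<Rightarrow> complex" where
  "fibpoly 0 x = 0"
| "fibpoly (Suc 0) x = 1"
| "fibpoly (Suc (Suc n)) x = x * fibpoly (Suc n) x + fibpoly n x"

fun lucpoly :: "nat \<Rightarrow> complex \<Rightarrow> complex" where
  "lucpoly 0 x = 2"
| "lucpoly (Suc 0) x = x"
| "lucpoly (Suc (Suc n)) x = x * lucpoly (Suc n) x + lucpoly n x"

end

theory Submission
  imports Defs
begin

(* Both sums telescope. Put c = x^2 + 2 and r = 2 / c. The identities
   2 F_(m+2) = c F_m + x L_m  and  2 L_(m+2) = c L_m + x (x^2 + 4) F_m
   hold because both sides satisfy the Fibonacci recurrence in m and agree for m = 0, 1; they give
   r^k L_2k = c / x * (r^(k+1) F_(2k+2) - r^k F_2k)  and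
   r^k F_2k = c / (x (x^2 + 4)) * (r^(k+1) L_(2k+2) - r^k L_2k). *)

lemma fibonacci_recurrence_unique:
  fixes f g :: "nat \<Rightarrow> 'a::semiring"
  assumes "\<And>n. f (n + 2) = x * f (n + 1) + f n" and "\<And>n. g (n + 2) = x * g (n + 1) + g n"
    and "f 0 = g 0" and "f 1 = g 1"
  shows "f m = g m"
proof (induction m rule: induct_nat_012)
  case (ge2 n)
  then show ?case
    using assms(1,2)[of n] by (simp add: numeral_2_eq_2)
qed (use assms in simp_all)

lemma double_fibpoly_add_two:
  "2 * fibpoly (m + 2) x = (x^2 + 2) * fibpoly m x + x * lucpoly m x"
  by (rule fibonacci_recurrence_unique[where x = x]) (auto simp: algebra_simps power2_eq_square eval_nat_numeral)

lemma double_lucpoly_add_two: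
  "2 * lucpoly (m + 2) x = (x^2 + 2) * lucpoly m x + x * (x^2 + 4) * fibpoly m x"
  by (rule fibonacci_recurrence_unique[where x = x]) (auto simp: algebra_simps power2_eq_square eval_nat_numeral)

lemma square_add_of_real_square_eq_0_iff:
  fixes x :: complex
  shows "x^2 + (of_real a)^2 = 0 \<longleftrightarrow> x = of_real a * \<i> \<or> x = - of_real a * \<i>"
proof -
  have "x^2 + (of_real a)^2 = (x - of_real a * \<i>) * (x + of_real a * \<i>)"
    by (simp add: algebra_simps power2_eq_square)
  then show ?thesis
    by (simp add: add_eq_0_iff2)
qed

lemma sum_weighted_lucpoly_even:
  assumes "x \<noteq> 0" and "x^2 + 2 \<noteq> 0"
  shows "(\<Sum>k=0..n. (2 / (x^2 + 2))^k * lucpoly (2*k) x)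
           = 2^(n+1) / (x * (x^2 + 2)^n) * fibpoly (2*n+2) x"
proof -
  define c r where "c = x^2 + 2" and "r = 2 / c"
  define b where "b k = r^k * fibpoly (2*k) x" for k
  have "c \<noteq> 0"
    using assms(2) by (simp add: c_def)
  have telescoping: "r^k * lucpoly (2*k) x = c / x * (b (Suc k) - b k)" for k
  proof -
    have "c / x * (b (Suc k) - b k) = r^k / x * (2 * fibpoly (2*k + 2) x - c * fibpoly (2*k) x)"
      using assms(1) \<open>c \<noteq> 0\<close> by (simp add: b_def r_def field_simps del: fibpoly.simps)
    also have "\<dots> = r^k * lucpoly (2*k) x"
      using assms(1) double_fibpoly_add_two[of "2*k" x] by (simp add: c_def del: fibpoly.simps)
    finally show ?thesis ..
  qed
  have "(\<Sum>k=0..n. r^k * lucpoly (2*k) x) = c / x * (b (Suc n) - b 0)"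
    by (simp only: telescoping sum_distrib_left[symmetric] sum_Suc_diff)
  also have "\<dots> = 2^(n+1) / (x * c^n) * fibpoly (2*n+2) x"
    using assms(1) \<open>c \<noteq> 0\<close> by (simp add: b_def r_def power_divide field_simps)
  finally show ?thesis
    by (simp add: r_def c_def)
qed

lemma sum_weighted_fibpoly_even:
  assumes "x \<noteq> 0" and "x^2 + 2 \<noteq> 0" and "x^2 + 4 \<noteq> 0"
  shows "(\<Sum>k=0..n. (2 / (x^2 + 2))^k * fibpoly (2*k) x)
           = (x^2 + 2) / (x * (x^2 + 4)) * ((2 / (x^2 + 2))^(n+1) * lucpoly (2*n+2) x - 2)"
proof -
  define c d r where "c = x^2 + 2" and "d = x^2 + 4" and "r = 2 / c"
  define b where "b k = r^k * lucpoly (2*k) x" for k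
  have "c \<noteq> 0" and "d \<noteq> 0"
    using assms(2,3) by (simp_all add: c_def d_def)
  have telescoping: "r^k * fibpoly (2*k) x = c / (x * d) * (b (Suc k) - b k)" for k
  proof -
    have "c / (x * d) * (b (Suc k) - b k)
        = r^k / (x * d) * (2 * lucpoly (2*k + 2) x - c * lucpoly (2*k) x)"
      using assms(1) \<open>c \<noteq> 0\<close> \<open>d \<noteq> 0\<close>
      by (simp add: b_def r_def field_simps del: lucpoly.simps)
    also have "\<dots> = r^k * fibpoly (2*k) x"
      using assms(1) \<open>d \<noteq> 0\<close> double_lucpoly_add_two[of "2*k" x]
      by (simp add: c_def d_def del: lucpoly.simps)
    finally show ?thesis ..
  qed
  have "(\<Sum>k=0..n. r^k * fibpoly (2*k) x) = c / (x * d) * (b (Suc n) - b 0)"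
    by (simp only: telescoping sum_distrib_left[symmetric] sum_Suc_diff)
  then show ?thesis
    by (simp add: b_def r_def c_def d_def)
qed

theorem corollary9:
  fixes x :: complex and n :: nat
  assumes "x \<noteq> 0" and "x \<noteq> 2 * \<i>" and "x \<noteq> - 2 * \<i>"
    and "x \<noteq> complex_of_real (sqrt 2) * \<i>" and "x \<noteq> - complex_of_real (sqrt 2) * \<i>"
  shows "((\<Sum>k=0..n. (2 / (x^2 + 2))^k * lucpoly (2*k) x)
           = 2^(n+1) / (x * (x^2 + 2)^n) * fibpoly (2*n+2) x)
    \<and> ((\<Sum>k=0..n. (2 / (x^2 + 2))^k * fibpoly (2*k) x)
           = (x^2 + 2) / (x * (x^2 + 4)) * ((2 / (x^2 + 2))^(n+1) * lucpoly (2*n+2) x - 2))"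
proof -
  have "x^2 + 2 \<noteq> 0"
    using assms(4,5) square_add_of_real_square_eq_0_iff[of x "sqrt 2"] by (simp flip: of_real_power)
  moreover have "x^2 + 4 \<noteq> 0"
    using assms(2,3) square_add_of_real_square_eq_0_iff[of x 2] by simp
  ultimately show ?thesis
    using assms(1) sum_weighted_lucpoly_even sum_weighted_fibpoly_even by blast
qed

end
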